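(* Let $P^1,\dots,P^m\in\Delta^n$ be in general position, and let $L_0=L(P^1,\dots,P^m)$. Let $\Psi'$ be the $(m-1)\times(n-1)$ matrix with entries $\Psi'_{i,j}=P^{i+1}_{j+1}-P^1_{j+1}$ ($i=1,\dots,m-1$, $j=1,\dots,n-1$), and let $\boldsymbol b=(H(P^1)-H(P^2),\dots,H(P^1)-H(P^m))\in\mathbb{R}^{m-1}$, where $H(P)=-\sum_j P_j\log P_j$. Let $\boldsymbol\theta=(\theta_2,\dots,\theta_n)$ be any solution of $\Psi'\,{}^t\boldsymbol\theta={}^t\boldsymbol b$, and define $Q\in\Delta^n$ by $Q_1=(1+\sum_{j=2}^n e^{\theta_j})^{-1}$ and $Q_j=Q_1e^{\theta_j}$ for $j=2,\dots,n$. Put $Q^0=\pi(Q|L_0)$. Then $Q^0$ is the unique point in $L_0$ satisfying $D(P^i\|Q^0)=D(P^1\|Q^0)$ for $i=2,\dots,m$.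
   Context: $\Delta^n=\{Q=(Q_1,\dots,Q_n):Q_j>0,\ \sum_jQ_j=1\}$. $D(Q\|Q')=\sum_jQ_j\log(Q_j/Q'_j)$. Points $P^1,\dots,P^m\in\Delta^n$ are in general position if $P^2-P^1,\dots,P^m-P^1$ are linearly independent. $L(P^1,\dots,P^m)=\{\sum_i\lambda_iP^i:\sum_i\lambda_i=1\}\cap\Delta^n$. For $Q'\in\Delta^n$ and such an affine subspace $L$, $\pi(Q'|L)$ denotes the unique $Q\in L$ minimizing $D(Q\|Q')$. *)

theory Defs
  imports "HOL-Analysis.Analysis"
begin

text \<open>Points of the open prob_simplex Delta^n are functions nat => real with coordinates
  0..n-1 (0-based: coordinate j here is coordinate j+1 of the paper), vanishing outside.\<close>
definition prob_simplex :: "nat \<Rightarrow> (nat \<Rightarrow> real) set" where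
  "prob_simplex n = {Q. (\<forall>j<n. Q j > 0) \<and> (\<forall>j\<ge>n. Q j = 0) \<and> (\<Sum>j<n. Q j) = 1}"

definition KL :: "nat \<Rightarrow> (nat \<Rightarrow> real) \<Rightarrow> (nat \<Rightarrow> real) \<Rightarrow> real" where
  "KL n Q Q' = (\<Sum>j<n. Q j * ln (Q j / Q' j))"

definition entropy :: "nat \<Rightarrow> (nat \<Rightarrow> real) \<Rightarrow> real" where
  "entropy n P = - (\<Sum>j<n. P j * ln (P j))"

text \<open>Points P 0, ..., P (m-1) (paper: P^1..P^m) in general position.\<close>
definition general_position :: "nat \<Rightarrow> nat \<Rightarrow> (nat \<Rightarrow> nat \<Rightarrow> real) \<Rightarrow> bool" where
  "general_position n m P \<longleftrightarrow>
     (\<forall>c::nat \<Rightarrow> real. (\<forall>j<n. (\<Sum>i\<in>{1..<m}. c i * (P i j - P 0 j)) = 0)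
        \<longrightarrow> (\<forall>i\<in>{1..<m}. c i = 0))"

definition affL :: "nat \<Rightarrow> nat \<Rightarrow> (nat \<Rightarrow> nat \<Rightarrow> real) \<Rightarrow> (nat \<Rightarrow> real) set" where
  "affL n m P = {Q \<in> prob_simplex n. \<exists>lam::nat \<Rightarrow> real. (\<Sum>i<m. lam i) = 1 \<and>
                     Q = (\<lambda>j. \<Sum>i<m. lam i * P i j)}"

definition iproj :: "nat \<Rightarrow> (nat \<Rightarrow> real) \<Rightarrow> (nat \<Rightarrow> real) set \<Rightarrow> (nat \<Rightarrow> real)" where
  "iproj n Q' L = (THE Q. Q \<in> L \<and> (\<forall>R\<in>L. KL n Q Q' \<le> KL n R Q'))"

definition expfam :: "nat \<Rightarrow> (nat \<Rightarrow> real) \<Rightarrow> (nat \<Rightarrow> real)" where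
  "expfam n \<theta> = (\<lambda>j. let Q0 = 1 / (1 + (\<Sum>k\<in>{1..<n}. exp (\<theta> k))) in
                     if j = 0 then Q0 else if j < n then Q0 * exp (\<theta> j) else 0)"

end

theory Submission
  imports Defs "HOL-Real_Asymp.Real_Asymp"
begin

text \<open>If \<open>R \<in> L\<close> and \<open>ln (R/Q)\<close> is orthogonal to the directions \<open>P\<^sup>i - P\<^sup>1\<close> of \<open>L\<close>, then
  \<open>D(S\<parallel>Q) = D(S\<parallel>R) + D(R\<parallel>Q)\<close> for every \<open>S \<in> L\<close>, so \<open>R = \<pi>(Q|L)\<close> by Gibbs' inequality.
  Such an \<open>R\<close> exists: \<open>D(\<cdot>\<parallel>Q)\<close> attains its minimum on the closure of \<open>L\<close>, which is compact
  because general position bounds the affine coordinates; the minimum is interior because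
  \<open>x ln x\<close> has infinite slope at \<open>0\<close>; and at an interior minimum the first-order conditions are
  exactly the orthogonality. For the exponential-family point \<open>Q\<close>, \<open>ln Q\<close> is \<open>\<theta>\<close> up to a
  constant, so the equations \<open>\<Psi>'\<theta> = b\<close> turn orthogonality into \<open>D(P\<^sup>i\<parallel>R) = D(P\<^sup>1\<parallel>R)\<close>.\<close>

lemma xlnx_ratio_ge:
  fixes s r :: real assumes "0 < s" "0 < r"
  shows "s - r \<le> s * ln (s / r)"
proof -
  have "s * ln (r / s) \<le> s * (r / s - 1)"
    using assms by (intro mult_left_mono ln_le_minus_one) auto
  moreover have "s * (r / s - 1) = r - s" using assms by (simp add: field_simps)
  moreover have "ln (s / r) = - ln (r / s)" using assms by (simp add: ln_div)
  ultimately show ?thesis by simp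
qed

lemma xlnx_ratio_eq_imp_eq:
  fixes s r :: real assumes "0 < s" "0 < r" "s * ln (s / r) = s - r"
  shows "s = r"
proof -
  have "ln (s / r) = - ln (r / s)" using assms by (simp add: ln_div)
  with assms have "ln (r / s) = r / s - 1" by (simp add: field_simps)
  hence "r / s = 1" using assms by (intro ln_eq_minus_one) auto
  thus ?thesis using assms by simp
qed

lemma KL_nonneg:
  assumes "S \<in> prob_simplex n" "R \<in> prob_simplex n"
  shows "0 \<le> KL n S R"
proof -
  have "(\<Sum>j<n. S j - R j) \<le> KL n S R"
    unfolding KL_def using assms by (intro sum_mono xlnx_ratio_ge) (auto simp: prob_simplex_def)
  thus ?thesis using assms by (simp add: prob_simplex_def sum_subtractf)
qed

lemma KL_le_0_imp_eq:
  assumes S: "S \<in> prob_simplex n" and R: "R \<in> prob_simplex n" and "KL n S R \<le> 0"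
  shows "S = R"
proof -
  define d where "d j = S j * ln (S j / R j) - (S j - R j)" for j
  have d_nonneg: "\<forall>j\<in>{..<n}. 0 \<le> d j"
    using S R xlnx_ratio_ge by (auto simp: d_def prob_simplex_def)
  have "(\<Sum>j<n. d j) = KL n S R"
    using S R by (simp add: d_def KL_def sum_subtractf prob_simplex_def)
  hence "(\<Sum>j<n. d j) = 0" using KL_nonneg[OF S R] \<open>KL n S R \<le> 0\<close> by simp
  hence "\<forall>j<n. d j = 0" using sum_nonneg_eq_0_iff[of "{..<n}" d] d_nonneg by simp
  hence "\<forall>j<n. S j = R j"
    using S R xlnx_ratio_eq_imp_eq by (auto simp: d_def prob_simplex_def)
  moreover have "\<forall>j\<ge>n. S j = R j" using S R by (simp add: prob_simplex_def)
  ultimately show ?thesis by (metis ext not_le)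
qed

text \<open>Both points lie above the tangent line at the mean \<open>z\<close>.\<close>
lemma xlnx_ratio_convex:
  fixes x y q t :: real
  assumes "0 < x" "0 < y" "0 < q" "0 \<le> t" "t \<le> 1"
  shows "((1-t)*x + t*y) * ln (((1-t)*x + t*y) / q) \<le> (1-t) * (x * ln (x/q)) + t * (y * ln (y/q))"
proof -
  define z where "z = (1-t)*x + t*y"
  have z: "0 < z" unfolding z_def using assms
    by (cases "t = 0") (auto intro: add_nonneg_pos add_pos_nonneg)
  have "(1-t) * (x - z) \<le> (1-t) * (x * ln (x/z))" "t * (y - z) \<le> t * (y * ln (y/z))"
    using assms z xlnx_ratio_ge by (auto intro: mult_left_mono)
  moreover have "(1-t) * (x - z) + t * (y - z) = 0" unfolding z_def by (simp add: algebra_simps)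
  moreover have "ln (x/q) = ln (x/z) + ln (z/q)" "ln (y/q) = ln (y/z) + ln (z/q)"
    using assms z by (simp_all add: ln_div)
  ultimately have "z * ln (z/q) \<le> (1-t) * (x * ln (x/q)) + t * (y * ln (y/q))"
    unfolding z_def by (simp add: algebra_simps)
  thus ?thesis unfolding z_def .
qed

lemma xlnx_ratio_off_boundary:
  fixes x y q t :: real
  assumes "0 \<le> x" "0 < y" "0 < q" "0 < t" "t \<le> 1"
  shows "((1-t)*x + t*y) * ln (((1-t)*x + t*y) / q)
    \<le> x * ln (x/q) + t * (y * ln (y/q) - x * ln (x/q)) + (if x = 0 then t * y * ln t else 0)"
proof (cases "x = 0")
  case True
  have "ln (t * y / q) = ln t + ln (y / q)" using assms by (simp add: ln_mult ln_div)
  thus ?thesis using True by (simp add: algebra_simps)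
next
  case False
  thus ?thesis using xlnx_ratio_convex[of x y q t] assms by (simp add: algebra_simps)
qed

lemma continuous_on_xlnx_ratio:
  assumes "0 < q" shows "continuous_on {0..} (\<lambda>x::real. x * ln (x / q))"
proof -
  have "continuous (at x within {0..}) (\<lambda>x::real. x * ln x)" if "x \<ge> 0" for x
  proof (cases "x = 0")
    case True
    have "((\<lambda>x::real. x * ln x) \<longlongrightarrow> 0) (at_right 0)" by real_asymp
    thus ?thesis using True by (simp add: continuous_within at_within_Ici_at_right)
  next
    case False
    hence "isCont (\<lambda>x::real. x * ln x) x" using that by (intro continuous_intros) auto
    thus ?thesis by (simp add: continuous_at_imp_continuous_at_within)
  qed
  hence "continuous_on {0..} (\<lambda>x::real. x * ln x)"
    by (simp add: continuous_on_eq_continuous_within)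
  hence "continuous_on {0..} (\<lambda>x::real. x * ln x - x * ln q)"
    by (rule continuous_on_diff) (intro continuous_intros)
  moreover have "x * ln x - x * ln q = x * ln (x / q)" if "x \<in> {0..}" for x
    using assms that by (cases "x = 0") (auto simp: ln_div algebra_simps)
  ultimately show ?thesis by (rule continuous_on_eq)
qed

text \<open>The entropy term \<open>t ln t\<close> of a coordinate leaving zero beats any linear change,
  so moving off the boundary decreases the divergence.\<close>
lemma KL_decreases_towards_interior:
  assumes R: "\<forall>j<n. 0 \<le> R j" and S: "\<forall>j<n. 0 < S j" and Q: "\<forall>j<n. 0 < Q j"
    and j0: "j0 < n" "R j0 = 0"
  shows "\<exists>t>0. t \<le> 1 \<and> KL n (\<lambda>j. (1 - t) * R j + t * S j) Q < KL n R Q"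
proof -
  define h where "h j x = x * ln (x / Q j)" for j x
  define Z where "Z = {j\<in>{..<n}. R j = 0}"
  define a where "a = (\<Sum>j\<in>Z. S j)"
  define C where "C = (\<Sum>j<n. h j (S j) - h j (R j))"
  define t where "t = min 1 (exp (-(\<bar>C\<bar> + 1) / a))"
  have "S j0 \<le> a" unfolding a_def Z_def using j0 S by (intro member_le_sum) (auto simp: less_imp_le)
  hence a: "0 < a" using S j0 by (meson less_le_trans)
  have t: "0 < t" "t \<le> 1" unfolding t_def by auto
  have "ln t \<le> ln (exp (-(\<bar>C\<bar> + 1) / a))"
    using t(1) by (subst ln_le_cancel_iff) (auto simp: t_def)
  hence "a * ln t \<le> -(\<bar>C\<bar> + 1)" using a by (simp add: field_simps)
  hence "t * (C + a * ln t) < 0" using t by (intro mult_pos_neg) auto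
  hence neg: "t * C + t * ln t * a < 0" by (simp add: algebra_simps)
  have step: "h j ((1 - t) * R j + t * S j)
      \<le> h j (R j) + t * (h j (S j) - h j (R j)) + (if R j = 0 then t * S j * ln t else 0)"
    if "j < n" for j
    using xlnx_ratio_off_boundary[of "R j" "S j" "Q j" t] R S Q t that by (simp add: h_def)
  have "KL n (\<lambda>j. (1 - t) * R j + t * S j) Q = (\<Sum>j<n. h j ((1 - t) * R j + t * S j))"
    by (simp add: KL_def h_def)
  also have "\<dots> \<le> (\<Sum>j<n. h j (R j) + t * (h j (S j) - h j (R j))
                      + (if R j = 0 then t * S j * ln t else 0))"
    by (intro sum_mono step) simp
  also have "\<dots> = KL n R Q + t * C + t * ln t * a"
  proof -
    have "(\<Sum>j<n. if R j = 0 then t * S j * ln t else 0) = (\<Sum>j\<in>Z. t * S j * ln t)"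
      unfolding Z_def by (rule sum.inter_filter[symmetric]) simp
    also have "\<dots> = t * ln t * a" by (simp add: a_def sum_distrib_left algebra_simps)
    finally show ?thesis by (simp add: KL_def C_def h_def sum.distrib sum_distrib_left)
  qed
  finally show ?thesis using neg t by (intro exI[of _ t]) auto
qed

lemma KL_stationary:
  assumes R: "\<forall>j<n. 0 < R j" and Q: "\<forall>j<n. 0 < Q j" and w: "(\<Sum>j<n. w j) = 0"
    and min: "\<forall>\<^sub>F t in nhds 0. KL n R Q \<le> KL n (\<lambda>j. R j + t * w j) Q"
  shows "(\<Sum>j<n. w j * ln (R j / Q j)) = 0"
proof -
  define \<phi> where "\<phi> t = KL n (\<lambda>j. R j + t * w j) Q" for t
  have "(\<phi> has_real_derivative (\<Sum>j<n. w j * ln (R j / Q j) + w j)) (at 0)"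
    unfolding \<phi>_def KL_def
  proof (intro DERIV_sum)
    fix j assume "j \<in> {..<n}"
    hence pos: "0 < R j" "0 < Q j" using R Q by auto
    have "((\<lambda>t. R j + t * w j) has_real_derivative w j) (at 0)"
      by (auto intro!: derivative_eq_intros)
    moreover have "((\<lambda>t. ln ((R j + t * w j) / Q j)) has_real_derivative w j / R j) (at 0)"
      using pos by (auto intro!: derivative_eq_intros)
    ultimately show "((\<lambda>t. (R j + t * w j) * ln ((R j + t * w j) / Q j))
        has_real_derivative w j * ln (R j / Q j) + w j) (at 0)"
      by (rule DERIV_cong[OF DERIV_mult]) (use pos in simp)
  qed
  moreover obtain d where "0 < d" "\<forall>t. \<bar>0 - t\<bar> < d \<longrightarrow> \<phi> 0 \<le> \<phi> t"
    using min unfolding eventually_nhds_metric by (auto simp: \<phi>_def dist_real_def)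
  ultimately have "(\<Sum>j<n. w j * ln (R j / Q j) + w j) = 0" by (rule DERIV_local_min)
  thus ?thesis using w by (simp add: sum.distrib)
qed

definition log_ratio_orthogonal ::
    "nat \<Rightarrow> nat \<Rightarrow> (nat \<Rightarrow> nat \<Rightarrow> real) \<Rightarrow> (nat \<Rightarrow> real) \<Rightarrow> (nat \<Rightarrow> real) \<Rightarrow> bool" where
  "log_ratio_orthogonal n m P R Q \<longleftrightarrow>
     (\<forall>i\<in>{1..<m}. (\<Sum>j<n. (P i j - P 0 j) * ln (R j / Q j)) = 0)"

definition affine_point :: "(nat \<Rightarrow> nat \<Rightarrow> real) \<Rightarrow> nat \<Rightarrow> (nat \<Rightarrow> real) \<Rightarrow> nat \<Rightarrow> real" where
  "affine_point P m \<mu> j = P 0 j + (\<Sum>i\<in>{1..<m}. \<mu> i * (P i j - P 0 j))"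

lemma sum_affine_point:
  assumes "m \<ge> 1" "\<forall>i<m. P i \<in> prob_simplex n"
  shows "(\<Sum>j<n. affine_point P m \<mu> j) = 1"
proof -
  have "(\<Sum>j<n. \<Sum>i\<in>{1..<m}. \<mu> i * (P i j - P 0 j))
      = (\<Sum>i\<in>{1..<m}. \<mu> i * ((\<Sum>j<n. P i j) - (\<Sum>j<n. P 0 j)))"
    by (subst sum.swap) (simp add: right_diff_distrib sum_subtractf sum_distrib_left)
  also have "\<dots> = 0" using assms by (simp add: prob_simplex_def)
  finally show ?thesis using assms by (simp add: affine_point_def sum.distrib prob_simplex_def)
qed

lemma affine_point_beyond:
  assumes "m \<ge> 1" "\<forall>i<m. P i \<in> prob_simplex n" "j \<ge> n"
  shows "affine_point P m \<mu> j = 0"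
  using assms unfolding affine_point_def prob_simplex_def by auto

lemma affine_point_shrink:
  "affine_point P m (\<lambda>i. (1 - t) * \<mu> i) j = (1 - t) * affine_point P m \<mu> j + t * P 0 j"
  by (simp add: affine_point_def sum_distrib_left algebra_simps)

lemma affine_point_shift:
  assumes "i \<in> {1..<m}"
  shows "affine_point P m (\<mu>(i := \<mu> i + t)) j = affine_point P m \<mu> j + t * (P i j - P 0 j)"
proof -
  have "(\<Sum>k\<in>{1..<m}. (\<mu>(i := \<mu> i + t)) k * (P k j - P 0 j))
      = (\<Sum>k\<in>{1..<m}. \<mu> k * (P k j - P 0 j) + (if k = i then t * (P k j - P 0 j) else 0))"
    by (intro sum.cong) (auto simp: algebra_simps)
  thus ?thesis using assms by (simp add: affine_point_def sum.distrib)
qed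

lemma affine_point_in_affL:
  assumes "m \<ge> 1" "\<forall>i<m. P i \<in> prob_simplex n" "\<forall>j<n. 0 < affine_point P m \<mu> j"
  shows "affine_point P m \<mu> \<in> affL n m P"
proof -
  define lam where "lam = \<mu>(0 := 1 - (\<Sum>i\<in>{1..<m}. \<mu> i))"
  have split: "{..<m} = insert 0 {1..<m}" using assms(1) by auto
  have lam_tail: "(\<Sum>i\<in>{1..<m}. lam i * g i) = (\<Sum>i\<in>{1..<m}. \<mu> i * g i)" for g
    by (intro sum.cong) (auto simp: lam_def)
  have "(\<Sum>i<m. lam i) = 1" using lam_tail[of "\<lambda>_. 1"] by (simp add: split lam_def)
  moreover have "affine_point P m \<mu> j = (\<Sum>i<m. lam i * P i j)" for j
    using lam_tail[of "\<lambda>i. P i j"]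
    by (simp add: split affine_point_def lam_def right_diff_distrib sum_subtractf
        sum_distrib_right sum_distrib_left algebra_simps)
  moreover have "affine_point P m \<mu> \<in> prob_simplex n"
    using assms affine_point_beyond sum_affine_point by (auto simp: prob_simplex_def)
  ultimately show ?thesis unfolding affL_def by auto
qed

lemma affine_point_restrict:
  "affine_point P m (\<lambda>i. if i \<in> {1..<m} then \<mu> i else 0) = affine_point P m \<mu>"
  by (simp add: fun_eq_iff affine_point_def)

lemma continuous_on_coordinate [continuous_intros]: "continuous_on S (\<lambda>x::nat \<Rightarrow> real. x i)"
  by (rule continuous_on_subset[OF continuous_on_product_coordinates]) simp

lemma compact_PiE_UNIV:
  assumes "\<And>i. compact (A i :: real set)" shows "compact (PiE UNIV A)"
  using compactin_PiE[of "\<lambda>i. euclidean" UNIV A] assms by (simp add: euclidean_product_topology)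

lemma continuous_on_affine_point [continuous_intros]:
  "continuous_on S (\<lambda>\<mu>. affine_point P m \<mu> j)"
  unfolding affine_point_def by (intro continuous_intros)

lemma general_position_unit_sphere_bound:
  assumes gp: "general_position n m P"
  obtains c where "0 < c"
    "\<And>\<mu>. (\<Sum>i\<in>{1..<m}. \<mu> i ^ 2) = 1 \<Longrightarrow>
          c \<le> (\<Sum>j<n. (\<Sum>i\<in>{1..<m}. \<mu> i * (P i j - P 0 j))^2)"
proof -
  define g where "g \<mu> = (\<Sum>j<n. (\<Sum>i\<in>{1..<m}. \<mu> i * (P i j - P 0 j))^2)" for \<mu> :: "nat \<Rightarrow> real"
  define sphere where "sphere = PiE UNIV (\<lambda>i. if i \<in> {1..<m} then {-1..1} else {0::real})
                                  \<inter> {\<mu>. (\<Sum>i\<in>{1..<m}. \<mu> i ^ 2) = 1}"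
  have restrict: "(\<lambda>i. if i \<in> {1..<m} then \<mu> i else 0) \<in> sphere \<and>
      g (\<lambda>i. if i \<in> {1..<m} then \<mu> i else 0) = g \<mu>"
    if "(\<Sum>i\<in>{1..<m}. \<mu> i ^ 2) = 1" for \<mu>
  proof -
    have "\<mu> i ^ 2 \<le> 1" if "i \<in> {1..<m}" for i
      using member_le_sum[of i "{1..<m}" "\<lambda>i. \<mu> i ^ 2"] that \<open>(\<Sum>i\<in>{1..<m}. \<mu> i ^ 2) = 1\<close> by simp
    hence "\<bar>\<mu> i\<bar> \<le> 1" if "i \<in> {1..<m}" for i using that by (simp add: abs_square_le_1)
    hence "\<mu> i \<in> {-1..1}" if "i \<in> {1..<m}" for i
      using that abs_le_D1 abs_le_D2 by fastforce
    thus ?thesis using that by (auto simp: sphere_def g_def)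
  qed
  show ?thesis
  proof (cases "\<exists>\<mu>::nat \<Rightarrow> real. (\<Sum>i\<in>{1..<m}. \<mu> i ^ 2) = 1")
    case False
    show ?thesis
    proof (rule that[of 1])
      fix \<mu> :: "nat \<Rightarrow> real" assume "(\<Sum>i\<in>{1..<m}. \<mu> i ^ 2) = 1"
      with False show "1 \<le> (\<Sum>j<n. (\<Sum>i\<in>{1..<m}. \<mu> i * (P i j - P 0 j))^2)" by blast
    qed simp
  next
    case True
    hence "sphere \<noteq> {}" using restrict by blast
    moreover have "compact sphere" unfolding sphere_def
      by (intro compact_Int_closed compact_PiE_UNIV closed_Collect_eq continuous_intros) auto
    moreover have "continuous_on sphere g" unfolding g_def by (intro continuous_intros)
    ultimately obtain \<mu>0 where \<mu>0: "\<mu>0 \<in> sphere" "\<And>\<mu>. \<mu> \<in> sphere \<Longrightarrow> g \<mu>0 \<le> g \<mu>"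
      using continuous_attains_inf[of sphere g] by blast
    have "g \<mu>0 \<noteq> 0"
    proof
      assume "g \<mu>0 = 0"
      hence "\<forall>j<n. (\<Sum>i\<in>{1..<m}. \<mu>0 i * (P i j - P 0 j)) = 0"
        unfolding g_def by (subst (asm) sum_nonneg_eq_0_iff) auto
      hence "\<forall>i\<in>{1..<m}. \<mu>0 i = 0" using gp unfolding general_position_def by blast
      thus False using \<mu>0(1) by (simp add: sphere_def)
    qed
    moreover have "0 \<le> g \<mu>0" unfolding g_def by (intro sum_nonneg) auto
    ultimately have "0 < g \<mu>0" by simp
    moreover have "g \<mu>0 \<le> g \<mu>" if "(\<Sum>i\<in>{1..<m}. \<mu> i ^ 2) = 1" for \<mu>
      using \<mu>0(2) restrict[OF that] by metis
    ultimately show ?thesis using that unfolding g_def by blast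
  qed
qed

lemma general_position_coercive:
  assumes gp: "general_position n m P"
  obtains c where "0 < c"
    "\<And>\<mu>. c * (\<Sum>i\<in>{1..<m}. \<mu> i ^ 2) \<le> (\<Sum>j<n. (\<Sum>i\<in>{1..<m}. \<mu> i * (P i j - P 0 j))^2)"
proof -
  obtain c where c: "0 < c"
    "\<And>\<mu>. (\<Sum>i\<in>{1..<m}. \<mu> i ^ 2) = 1 \<Longrightarrow>
          c \<le> (\<Sum>j<n. (\<Sum>i\<in>{1..<m}. \<mu> i * (P i j - P 0 j))^2)"
    using general_position_unit_sphere_bound[OF gp] by blast
  have "c * (\<Sum>i\<in>{1..<m}. \<mu> i ^ 2) \<le> (\<Sum>j<n. (\<Sum>i\<in>{1..<m}. \<mu> i * (P i j - P 0 j))^2)" for \<mu>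
  proof (cases "(\<Sum>i\<in>{1..<m}. \<mu> i ^ 2) = 0")
    case True
    thus ?thesis by (simp add: sum_nonneg)
  next
    case False
    define r where "r = (\<Sum>i\<in>{1..<m}. \<mu> i ^ 2)"
    have r: "0 < r" using False unfolding r_def by (simp add: order_less_le sum_nonneg)
    have "(\<Sum>i\<in>{1..<m}. (\<mu> i / sqrt r) ^ 2) = 1"
      using r by (simp add: power_divide sum_divide_distrib[symmetric] r_def)
    hence "c \<le> (\<Sum>j<n. (\<Sum>i\<in>{1..<m}. \<mu> i / sqrt r * (P i j - P 0 j))^2)" by (rule c(2))
    also have "\<dots> = (\<Sum>j<n. (\<Sum>i\<in>{1..<m}. \<mu> i * (P i j - P 0 j))^2) / r"
    proof -
      have "(\<Sum>i\<in>{1..<m}. \<mu> i / sqrt r * (P i j - P 0 j))^2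
          = (\<Sum>i\<in>{1..<m}. \<mu> i * (P i j - P 0 j))^2 / r" for j
        using r by (simp add: sum_divide_distrib[symmetric] power_divide)
      thus ?thesis by (simp add: sum_divide_distrib)
    qed
    finally show ?thesis using r by (simp add: r_def field_simps)
  qed
  thus ?thesis using that c(1) by blast
qed

lemma affine_coeffs_bounded:
  assumes m: "m \<ge> 1" and P: "\<forall>i<m. P i \<in> prob_simplex n" and gp: "general_position n m P"
  obtains B where "0 \<le> B"
    "\<And>\<mu> i. \<forall>j<n. 0 \<le> affine_point P m \<mu> j \<Longrightarrow> i \<in> {1..<m} \<Longrightarrow> \<bar>\<mu> i\<bar> \<le> B"
proof -
  obtain c where c: "0 < c"
    "\<And>\<mu>. c * (\<Sum>i\<in>{1..<m}. \<mu> i ^ 2) \<le> (\<Sum>j<n. (\<Sum>i\<in>{1..<m}. \<mu> i * (P i j - P 0 j))^2)"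
    using general_position_coercive[OF gp] by blast
  have P0: "P 0 \<in> prob_simplex n" using m P by auto
  have "\<bar>\<mu> i\<bar> \<le> sqrt (real n / c)"
    if feasible: "\<forall>j<n. 0 \<le> affine_point P m \<mu> j" and i: "i \<in> {1..<m}" for \<mu> i
  proof -
    have "(\<Sum>i\<in>{1..<m}. \<mu> i * (P i j - P 0 j))^2 \<le> 1" if j: "j < n" for j
    proof -
      have "affine_point P m \<mu> j \<le> (\<Sum>j<n. affine_point P m \<mu> j)"
        using feasible j by (intro member_le_sum) auto
      hence "affine_point P m \<mu> j \<le> 1" using sum_affine_point[OF m P] by simp
      moreover have "P 0 j \<le> (\<Sum>j<n. P 0 j)"
        using P0 j by (intro member_le_sum) (auto simp: prob_simplex_def less_imp_le)
      hence "P 0 j \<le> 1" using P0 by (simp add: prob_simplex_def)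
      moreover have "0 \<le> P 0 j" using P0 j by (simp add: prob_simplex_def less_imp_le)
      ultimately have "\<bar>affine_point P m \<mu> j - P 0 j\<bar> \<le> 1"
        using feasible j by (auto simp: abs_le_iff)
      thus ?thesis by (simp add: affine_point_def abs_square_le_1)
    qed
    hence "(\<Sum>j<n. (\<Sum>i\<in>{1..<m}. \<mu> i * (P i j - P 0 j))^2) \<le> (\<Sum>j<n. 1)"
      by (intro sum_mono) simp
    hence "c * (\<Sum>i\<in>{1..<m}. \<mu> i ^ 2) \<le> real n" using c(2)[of \<mu>] by simp
    moreover have "c * \<mu> i ^ 2 \<le> c * (\<Sum>i\<in>{1..<m}. \<mu> i ^ 2)"
      using i c(1) by (intro mult_left_mono member_le_sum) auto
    ultimately have "c * \<mu> i ^ 2 \<le> real n" by linarith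
    hence "\<bar>\<mu> i\<bar> ^ 2 \<le> real n / c" using c(1) by (simp add: pos_le_divide_eq mult.commute)
    thus ?thesis by (rule real_le_rsqrt)
  qed
  moreover have "0 \<le> sqrt (real n / c)" using c(1) by simp
  ultimately show ?thesis using that by blast
qed

lemma exists_KL_minimizer_on_affine_hull:
  assumes m: "m \<ge> 1" and P: "\<forall>i<m. P i \<in> prob_simplex n" and gp: "general_position n m P"
    and Q: "\<forall>j<n. 0 < Q j"
  obtains \<mu>s where "\<forall>j<n. 0 \<le> affine_point P m \<mu>s j"
    "\<And>\<mu>. \<forall>j<n. 0 \<le> affine_point P m \<mu> j \<Longrightarrow>
          KL n (affine_point P m \<mu>s) Q \<le> KL n (affine_point P m \<mu>) Q"
proof -
  obtain B where B: "0 \<le> B"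
    "\<And>\<mu> i. \<forall>j<n. 0 \<le> affine_point P m \<mu> j \<Longrightarrow> i \<in> {1..<m} \<Longrightarrow> \<bar>\<mu> i\<bar> \<le> B"
    using affine_coeffs_bounded[OF m P gp] by blast
  define feasible where "feasible = {\<mu>. \<forall>j<n. 0 \<le> affine_point P m \<mu> j}"
  txt \<open>Only the coefficients in \<open>{1..<m}\<close> matter; fixing the others to \<open>0\<close> makes the
    feasible set compact.\<close>
  define K where "K = PiE UNIV (\<lambda>i. if i \<in> {1..<m} then {-B..B} else {0::real}) \<inter> feasible"
  have "feasible = (\<Inter>j<n. {\<mu>. 0 \<le> affine_point P m \<mu> j})" by (auto simp: feasible_def)
  hence "closed feasible" by (auto intro!: closed_INT closed_Collect_le continuous_intros)
  hence "compact K" unfolding K_def by (intro compact_Int_closed compact_PiE_UNIV) auto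
  moreover have "(\<lambda>_. 0) \<in> K"
    using B(1) P m by (auto simp: K_def feasible_def affine_point_def prob_simplex_def less_imp_le)
  moreover have "continuous_on K (\<lambda>\<mu>. KL n (affine_point P m \<mu>) Q)"
    unfolding KL_def
  proof (intro continuous_on_sum)
    fix j assume "j \<in> {..<n}"
    thus "continuous_on K (\<lambda>\<mu>. affine_point P m \<mu> j * ln (affine_point P m \<mu> j / Q j))"
      using Q by (intro continuous_on_compose2[OF continuous_on_xlnx_ratio continuous_on_affine_point])
        (auto simp: K_def feasible_def)
  qed
  ultimately obtain \<mu>s where \<mu>s: "\<mu>s \<in> K"
    "\<And>\<mu>. \<mu> \<in> K \<Longrightarrow> KL n (affine_point P m \<mu>s) Q \<le> KL n (affine_point P m \<mu>) Q"
    using continuous_attains_inf by (metis empty_iff)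
  have "KL n (affine_point P m \<mu>s) Q \<le> KL n (affine_point P m \<mu>) Q" if "\<mu> \<in> feasible" for \<mu>
  proof -
    have "\<bar>\<mu> i\<bar> \<le> B" if "i \<in> {1..<m}" for i
      using B(2) that \<open>\<mu> \<in> feasible\<close> unfolding feasible_def by blast
    hence "\<mu> i \<in> {-B..B}" if "i \<in> {1..<m}" for i
      using that abs_le_D1 abs_le_D2 by fastforce
    moreover have "(\<lambda>i. if i \<in> {1..<m} then \<mu> i else 0) \<in> feasible"
      using \<open>\<mu> \<in> feasible\<close> by (simp only: feasible_def mem_Collect_eq affine_point_restrict)
    ultimately have "(\<lambda>i. if i \<in> {1..<m} then \<mu> i else 0) \<in> K" by (auto simp: K_def)
    from \<mu>s(2)[OF this] show ?thesis by (simp only: affine_point_restrict)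
  qed
  thus ?thesis using that \<mu>s(1) by (auto simp: K_def feasible_def)
qed

lemma affine_KL_minimizer_pos:
  assumes P0: "\<forall>j<n. 0 < P 0 j" and Q: "\<forall>j<n. 0 < Q j"
    and feasible: "\<forall>j<n. 0 \<le> affine_point P m \<mu>s j"
    and min: "\<And>\<mu>. \<forall>j<n. 0 \<le> affine_point P m \<mu> j \<Longrightarrow>
                 KL n (affine_point P m \<mu>s) Q \<le> KL n (affine_point P m \<mu>) Q"
  shows "\<forall>j<n. 0 < affine_point P m \<mu>s j"
proof (rule ccontr)
  define R where "R = affine_point P m \<mu>s"
  assume "\<not> (\<forall>j<n. 0 < affine_point P m \<mu>s j)"
  moreover have R: "\<forall>j<n. 0 \<le> R j" using feasible by (simp add: R_def)
  ultimately obtain j0 where j0: "j0 < n" "R j0 = 0" unfolding R_def by force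
  obtain t where t: "0 < t" "t \<le> 1"
    and less: "KL n (\<lambda>j. (1 - t) * R j + t * P 0 j) Q < KL n R Q"
    using KL_decreases_towards_interior[OF R P0 Q j0] by blast
  have shrink: "affine_point P m (\<lambda>i. (1 - t) * \<mu>s i) = (\<lambda>j. (1 - t) * R j + t * P 0 j)"
    by (simp add: fun_eq_iff R_def affine_point_shrink)
  have "\<forall>j<n. 0 \<le> affine_point P m (\<lambda>i. (1 - t) * \<mu>s i) j"
    unfolding shrink using t R P0 by (simp add: less_imp_le)
  from min[OF this] have "KL n R Q \<le> KL n (\<lambda>j. (1 - t) * R j + t * P 0 j) Q"
    by (simp only: shrink flip: R_def)
  with less show False by simp
qed

lemma affine_KL_minimizer_orthogonal:
  assumes P: "\<forall>i<m. P i \<in> prob_simplex n" and Q: "\<forall>j<n. 0 < Q j"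
    and pos: "\<forall>j<n. 0 < affine_point P m \<mu>s j"
    and min: "\<And>\<mu>. \<forall>j<n. 0 \<le> affine_point P m \<mu> j \<Longrightarrow>
                 KL n (affine_point P m \<mu>s) Q \<le> KL n (affine_point P m \<mu>) Q"
  shows "log_ratio_orthogonal n m P (affine_point P m \<mu>s) Q"
  unfolding log_ratio_orthogonal_def
proof
  fix i assume i: "i \<in> {1..<m}"
  define R where "R = affine_point P m \<mu>s"
  define w where "w j = P i j - P 0 j" for j
  have R: "\<forall>j<n. 0 < R j" using pos by (simp add: R_def)
  have shift: "affine_point P m (\<mu>s(i := \<mu>s i + t)) = (\<lambda>j. R j + t * w j)" for t
    by (simp add: fun_eq_iff affine_point_shift[OF i] R_def w_def)
  have "\<forall>\<^sub>F t in nhds 0. \<forall>j\<in>{..<n}. 0 < R j + t * w j"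
  proof (intro eventually_ball_finite ballI)
    fix j assume "j \<in> {..<n}"
    moreover have "((\<lambda>t. R j + t * w j) \<longlongrightarrow> R j + 0 * w j) (nhds 0)"
      by (intro tendsto_intros filterlim_ident)
    ultimately show "\<forall>\<^sub>F t in nhds 0. 0 < R j + t * w j"
      using R order_tendstoD(1) by fastforce
  qed simp
  hence local_min: "\<forall>\<^sub>F t in nhds 0. KL n R Q \<le> KL n (\<lambda>j. R j + t * w j) Q"
  proof (rule eventually_mono)
    fix t assume "\<forall>j\<in>{..<n}. 0 < R j + t * w j"
    hence "\<forall>j<n. 0 \<le> affine_point P m (\<mu>s(i := \<mu>s i + t)) j" by (simp add: shift less_imp_le)
    from min[OF this] show "KL n R Q \<le> KL n (\<lambda>j. R j + t * w j) Q"
      by (simp add: shift flip: R_def)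
  qed
  have "(\<Sum>j<n. w j) = 0" using P i by (simp add: w_def sum_subtractf prob_simplex_def)
  from KL_stationary[OF R Q this local_min]
  show "(\<Sum>j<n. (P i j - P 0 j) * ln (affine_point P m \<mu>s j / Q j)) = 0"
    by (simp add: w_def R_def)
qed

lemma exists_log_ratio_orthogonal:
  assumes m: "m \<ge> 1" and P: "\<forall>i<m. P i \<in> prob_simplex n" and gp: "general_position n m P"
    and Q: "Q \<in> prob_simplex n"
  obtains R where "R \<in> affL n m P" "log_ratio_orthogonal n m P R Q"
proof -
  have Qpos: "\<forall>j<n. 0 < Q j" and P0pos: "\<forall>j<n. 0 < P 0 j"
    using Q P m by (auto simp: prob_simplex_def)
  obtain \<mu>s where feasible: "\<forall>j<n. 0 \<le> affine_point P m \<mu>s j" and min: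
    "\<And>\<mu>. \<forall>j<n. 0 \<le> affine_point P m \<mu> j \<Longrightarrow>
          KL n (affine_point P m \<mu>s) Q \<le> KL n (affine_point P m \<mu>) Q"
    using exists_KL_minimizer_on_affine_hull[OF m P gp Qpos] by blast
  have pos: "\<forall>j<n. 0 < affine_point P m \<mu>s j"
    by (rule affine_KL_minimizer_pos[OF P0pos Qpos feasible min])
  show ?thesis
  proof (rule that)
    show "affine_point P m \<mu>s \<in> affL n m P" by (rule affine_point_in_affL[OF m P pos])
    show "log_ratio_orthogonal n m P (affine_point P m \<mu>s) Q"
      by (rule affine_KL_minimizer_orthogonal[OF P Qpos pos min])
  qed
qed

lemma KL_eq_cross_entropy:
  assumes "S \<in> prob_simplex n" "R \<in> prob_simplex n"
  shows "KL n S R = - entropy n S - (\<Sum>j<n. S j * ln (R j))"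
proof -
  have "KL n S R = (\<Sum>j<n. S j * ln (S j) - S j * ln (R j))" unfolding KL_def
    using assms by (intro sum.cong) (auto simp: prob_simplex_def ln_div algebra_simps)
  thus ?thesis by (simp add: entropy_def sum_subtractf)
qed

lemma affL_inner_eq:
  assumes "S \<in> affL n m P" "\<forall>i\<in>{1..<m}. (\<Sum>j<n. (P i j - P 0 j) * x j) = 0"
  shows "(\<Sum>j<n. S j * x j) = (\<Sum>j<n. P 0 j * x j)"
proof -
  obtain lam where lam: "(\<Sum>i<m. lam i) = 1" "S = (\<lambda>j. \<Sum>i<m. lam i * P i j)"
    using assms(1) unfolding affL_def by blast
  have vertex: "(\<Sum>j<n. P i j * x j) = (\<Sum>j<n. P 0 j * x j)" if "i < m" for i
  proof (cases "i = 0")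
    case False
    with that assms(2) have "(\<Sum>j<n. P i j * x j - P 0 j * x j) = 0" by (simp add: algebra_simps)
    thus ?thesis by (simp add: sum_subtractf)
  qed simp
  have "(\<Sum>j<n. S j * x j) = (\<Sum>j<n. \<Sum>i<m. lam i * P i j * x j)"
    unfolding lam(2) by (simp add: sum_distrib_right)
  also have "\<dots> = (\<Sum>i<m. lam i * (\<Sum>j<n. P i j * x j))"
    by (subst sum.swap) (simp add: sum_distrib_left mult.assoc)
  also have "\<dots> = (\<Sum>i<m. lam i * (\<Sum>j<n. P 0 j * x j))"
    by (rule sum.cong[OF refl]) (metis vertex lessThan_iff)
  also have "\<dots> = (\<Sum>j<n. P 0 j * x j)" using lam(1) by (simp add: sum_distrib_right[symmetric])
  finally show ?thesis .
qed

lemma KL_pythagoras: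
  assumes S: "S \<in> affL n m P" and R: "R \<in> affL n m P" and Q: "Q \<in> prob_simplex n"
    and orth: "log_ratio_orthogonal n m P R Q"
  shows "KL n S Q = KL n S R + KL n R Q"
proof -
  have "S \<in> prob_simplex n" "R \<in> prob_simplex n" using S R by (auto simp: affL_def)
  hence "KL n S Q - KL n S R = (\<Sum>j<n. S j * ln (R j / Q j))" unfolding KL_def sum_subtractf[symmetric]
    using Q by (intro sum.cong) (auto simp: prob_simplex_def ln_div algebra_simps)
  also have "\<dots> = (\<Sum>j<n. R j * ln (R j / Q j))"
    using affL_inner_eq[OF S] affL_inner_eq[OF R] orth by (simp add: log_ratio_orthogonal_def)
  also have "\<dots> = KL n R Q" unfolding KL_def ..
  finally show ?thesis by simp
qed

lemma iproj_eqI: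
  assumes R: "R \<in> affL n m P" and Q: "Q \<in> prob_simplex n"
    and orth: "log_ratio_orthogonal n m P R Q"
  shows "iproj n Q (affL n m P) = R"
  unfolding iproj_def
proof (rule the_equality)
  have pyth: "KL n S Q = KL n S R + KL n R Q" if "S \<in> affL n m P" for S
    using KL_pythagoras[OF that R Q orth] .
  have S_simplex: "S \<in> prob_simplex n" if "S \<in> affL n m P" for S
    using that by (simp add: affL_def)
  show "R \<in> affL n m P \<and> (\<forall>S\<in>affL n m P. KL n R Q \<le> KL n S Q)"
  proof (intro conjI ballI R)
    fix S assume S: "S \<in> affL n m P"
    have "0 \<le> KL n S R" using S_simplex[OF S] S_simplex[OF R] by (rule KL_nonneg)
    thus "KL n R Q \<le> KL n S Q" using pyth[OF S] by linarith
  qed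
  fix M assume M: "M \<in> affL n m P \<and> (\<forall>S\<in>affL n m P. KL n M Q \<le> KL n S Q)"
  hence "KL n M Q \<le> KL n R Q" using R by blast
  hence "KL n M R \<le> 0" using pyth[of M] M by linarith
  thus "M = R" using S_simplex[of M] S_simplex[OF R] M by (intro KL_le_0_imp_eq) auto
qed

lemma expfam_in_prob_simplex:
  assumes "n \<ge> 1" shows "expfam n \<theta> \<in> prob_simplex n"
proof -
  define c where "c = 1 / (1 + (\<Sum>k\<in>{1..<n}. exp (\<theta> k)))"
  have "0 < 1 + (\<Sum>k\<in>{1..<n}. exp (\<theta> k))" by (intro add_pos_nonneg sum_nonneg) auto
  hence c: "0 < c" "c * (1 + (\<Sum>k\<in>{1..<n}. exp (\<theta> k))) = 1" by (simp_all add: c_def)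
  have split: "{..<n} = insert 0 {1..<n}" using assms by auto
  have "(\<Sum>j<n. expfam n \<theta> j) = c + (\<Sum>j\<in>{1..<n}. c * exp (\<theta> j))"
    unfolding split using assms by (simp add: expfam_def c_def Let_def)
  also have "\<dots> = 1" using c(2) by (simp add: sum_distrib_left algebra_simps)
  finally show ?thesis using c(1) assms by (auto simp: prob_simplex_def expfam_def c_def Let_def)
qed

lemma ln_expfam:
  assumes "j \<in> {1..<n}" shows "ln (expfam n \<theta> j) = ln (expfam n \<theta> 0) + \<theta> j"
proof -
  have "0 < 1 / (1 + (\<Sum>k\<in>{1..<n}. exp (\<theta> k)))" by (intro divide_pos_pos add_pos_nonneg sum_nonneg) auto
  thus ?thesis using assms by (simp add: expfam_def Let_def ln_mult ln_div)
qed

lemma sum_diff_ln_expfam: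
  assumes "n \<ge> 1" "(\<Sum>j<n. S j) = (\<Sum>j<n. S' j)"
  shows "(\<Sum>j<n. (S j - S' j) * ln (expfam n \<theta> j)) = (\<Sum>j\<in>{1..<n}. (S j - S' j) * \<theta> j)"
proof -
  define c where "c = ln (expfam n \<theta> 0)"
  have split: "{..<n} = insert 0 {1..<n}" using assms(1) by auto
  have "(\<Sum>j\<in>{1..<n}. (S j - S' j) * ln (expfam n \<theta> j))
      = (\<Sum>j\<in>{1..<n}. (S j - S' j) * c + (S j - S' j) * \<theta> j)"
    by (rule sum.cong[OF refl]) (simp add: ln_expfam c_def algebra_simps)
  hence "(\<Sum>j<n. (S j - S' j) * ln (expfam n \<theta> j))
      = ((S 0 - S' 0) * c + (\<Sum>j\<in>{1..<n}. (S j - S' j) * c)) + (\<Sum>j\<in>{1..<n}. (S j - S' j) * \<theta> j)"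
    by (simp add: split sum.distrib c_def)
  also have "(S 0 - S' 0) * c + (\<Sum>j\<in>{1..<n}. (S j - S' j) * c) = (\<Sum>j<n. S j - S' j) * c"
    by (simp add: split sum_distrib_right distrib_right)
  finally show ?thesis using assms(2) by (simp add: sum_subtractf)
qed

lemma KL_diff_eq_log_ratio:
  assumes "S \<in> prob_simplex n" "S' \<in> prob_simplex n" "R \<in> prob_simplex n" "Q \<in> prob_simplex n"
    and "(\<Sum>j<n. (S j - S' j) * ln (Q j)) = entropy n S' - entropy n S"
  shows "KL n S R - KL n S' R = - (\<Sum>j<n. (S j - S' j) * ln (R j / Q j))"
proof -
  have "(\<Sum>j<n. (S j - S' j) * ln (R j / Q j))
      = (\<Sum>j<n. (S j - S' j) * ln (R j)) - (\<Sum>j<n. (S j - S' j) * ln (Q j))"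
    unfolding sum_subtractf[symmetric] using assms(3,4)
    by (intro sum.cong) (auto simp: prob_simplex_def ln_div algebra_simps)
  thus ?thesis using assms
    by (simp add: KL_eq_cross_entropy sum_subtractf left_diff_distrib)
qed

lemma prob_simplex_dim_ge_1: "S \<in> prob_simplex n \<Longrightarrow> n \<ge> 1"
  by (cases n) (auto simp: prob_simplex_def)

lemma KL_equal_iff_log_ratio_orthogonal:
  assumes m: "m \<ge> 1" and P: "\<forall>i<m. P i \<in> prob_simplex n"
    and entropy: "\<forall>i\<in>{1..<m}. (\<Sum>j\<in>{1..<n}. (P i j - P 0 j) * \<theta> j) = entropy n (P 0) - entropy n (P i)"
    and R: "R \<in> affL n m P"
  shows "(\<forall>i\<in>{1..<m}. KL n (P i) R = KL n (P 0) R) \<longleftrightarrow> log_ratio_orthogonal n m P R (expfam n \<theta>)"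
proof -
  define Q where "Q = expfam n \<theta>"
  have P0: "P 0 \<in> prob_simplex n" using m P by simp
  hence n: "n \<ge> 1" by (rule prob_simplex_dim_ge_1)
  hence Q: "Q \<in> prob_simplex n" unfolding Q_def by (rule expfam_in_prob_simplex)
  have R_simplex: "R \<in> prob_simplex n" using R by (simp add: affL_def)
  have "KL n (P i) R - KL n (P 0) R = - (\<Sum>j<n. (P i j - P 0 j) * ln (R j / Q j))"
    if i: "i \<in> {1..<m}" for i
  proof -
    have Pi: "P i \<in> prob_simplex n" using i P by simp
    have "(\<Sum>j<n. P i j) = (\<Sum>j<n. P 0 j)" using Pi P0 by (simp add: prob_simplex_def)
    from sum_diff_ln_expfam[OF n this] i entropy
    have "(\<Sum>j<n. (P i j - P 0 j) * ln (Q j)) = entropy n (P 0) - entropy n (P i)"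
      by (simp add: Q_def)
    thus ?thesis by (rule KL_diff_eq_log_ratio[OF Pi P0 R_simplex Q])
  qed
  thus ?thesis unfolding log_ratio_orthogonal_def Q_def[symmetric] by auto
qed

theorem lemma19:
  fixes n m :: nat and P :: "nat \<Rightarrow> nat \<Rightarrow> real" and \<theta> :: "nat \<Rightarrow> real"
  assumes "m \<ge> 1"
    and "\<forall>i<m. P i \<in> prob_simplex n"
    and "general_position n m P"
    and "\<forall>i\<in>{1..<m}. (\<Sum>j\<in>{1..<n}. (P i j - P 0 j) * \<theta> j) = entropy n (P 0) - entropy n (P i)"
  shows "iproj n (expfam n \<theta>) (affL n m P) \<in> affL n m P
     \<and> (\<forall>i\<in>{1..<m}. KL n (P i) (iproj n (expfam n \<theta>) (affL n m P))
                      = KL n (P 0) (iproj n (expfam n \<theta>) (affL n m P)))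
     \<and> (\<forall>R\<in>affL n m P. (\<forall>i\<in>{1..<m}. KL n (P i) R = KL n (P 0) R)
                      \<longrightarrow> R = iproj n (expfam n \<theta>) (affL n m P))"
proof -
  define Q where "Q = expfam n \<theta>"
  have "n \<ge> 1" using assms(1,2) prob_simplex_dim_ge_1[of "P 0"] by simp
  hence Q: "Q \<in> prob_simplex n" unfolding Q_def by (rule expfam_in_prob_simplex)
  obtain R0 where R0: "R0 \<in> affL n m P" "log_ratio_orthogonal n m P R0 Q"
    using exists_log_ratio_orthogonal[OF assms(1-3) Q] .
  have iproj: "iproj n Q (affL n m P) = R0" by (rule iproj_eqI[OF R0(1) Q R0(2)])
  have equal_iff: "(\<forall>i\<in>{1..<m}. KL n (P i) R = KL n (P 0) R) \<longleftrightarrow> log_ratio_orthogonal n m P R Q"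
    if "R \<in> affL n m P" for R
    unfolding Q_def by (rule KL_equal_iff_log_ratio_orthogonal[OF assms(1,2,4) that])
  show ?thesis unfolding Q_def[symmetric] iproj
  proof (intro conjI ballI impI)
    show "R0 \<in> affL n m P" by (rule R0(1))
    show "KL n (P i) R0 = KL n (P 0) R0" if "i \<in> {1..<m}" for i
      using equal_iff[OF R0(1)] R0(2) that by blast
    fix R assume "R \<in> affL n m P" "\<forall>i\<in>{1..<m}. KL n (P i) R = KL n (P 0) R"
    with equal_iff have "log_ratio_orthogonal n m P R Q" by blast
    from iproj_eqI[OF \<open>R \<in> affL n m P\<close> Q this] show "R = R0" using iproj by simp
  qed
qed

end
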